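(* Let $d>0$, let $J$ satisfy (J) and (J2), let $f$ satisfy (f3), and let $c_*>0$ be the minimal traveling wave speed. Then for every $c\in(0,c_* )$ there exists a semi-wave $\phi^c$ with speed $c$, i.e. a function $\phi^c\in C^1((-\infty,0])$ with values in $[0,1]$ satisfying $$d\int_{-\infty}^0J(x-y)\phi^c(y)\,dy-d\phi^c(x)+c(\phi^c)'(x)+f(\phi^c(x))=0\ (-\infty<x<0),\qquad \phi^c(-\infty)=1,\ \phi^c(0)=0,$$ and $\phi^c(x)$ is nonincreasing for $x\in(-\infty,0]$.
   Context: Condition (J): $J\in C(\mathbb{R})\cap L^\infty(\mathbb{R})$, $J\ge 0$, $J(0)>0$, $\int_{\mathbb{R}}J=1$, $J$ even. Condition (J2): there exists $\lambda>0$ with $\int_{\mathbb{R}}J(x)e^{\lambda x}dx<\infty$. Condition (f3): $f\in C^1([0,\infty))$, $f(0)=f(1)=0$, $f>0$ in $(0,1)$, $f'(0)>0>f'(1)$, $f(u)/u$ nonincreasing in $u>0$. Known fact (minimal speed): under (J), (J2), (f3) there is $c_*>0$ such that $d\int_{\mathbb{R}}J(x-y)\phi(y)dy-d\phi(x)+c\phi'(x)+f(\phi(x))=0$ on $\mathbb{R}$, $\phi(-\infty)=1$, $\phi(+\infty)=0$, has a nonincreasing solution $\phi\in L^\infty(\mathbb{R})$ if and only if $c\ge c_*$. *)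

theory Defs
  imports "HOL-Analysis.Analysis"
begin

definition cond_J :: "(real \<Rightarrow> real) \<Rightarrow> bool" where
  "cond_J J \<longleftrightarrow> continuous_on UNIV J \<and> bounded (range J) \<and>
     (\<forall>x. J x \<ge> 0) \<and> J 0 > 0 \<and> integrable lborel J \<and>
     (\<integral>x. J x \<partial>lborel) = 1 \<and> (\<forall>x. J (- x) = J x)"

definition cond_J2 :: "(real \<Rightarrow> real) \<Rightarrow> bool" where
  "cond_J2 J \<longleftrightarrow> (\<exists>l>0. integrable lborel (\<lambda>x. J x * exp (l * x)))"

text \<open>Condition (f3); f is only relevant on [0,\<infinity>).\<close>
definition cond_f3 :: "(real \<Rightarrow> real) \<Rightarrow> bool" where
  "cond_f3 f \<longleftrightarrow> (\<exists>f'. (\<forall>u\<ge>0. (f has_real_derivative f' u) (at u within {0..})) \<and>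
       continuous_on {0..} f' \<and> f' 0 > 0 \<and> f' 1 < 0) \<and>
     f 0 = 0 \<and> f 1 = 0 \<and> (\<forall>u. 0 < u \<and> u < 1 \<longrightarrow> f u > 0) \<and>
     (\<forall>u v. 0 < u \<and> u \<le> v \<longrightarrow> f v / v \<le> f u / u)"

definition tw_exists :: "real \<Rightarrow> (real \<Rightarrow> real) \<Rightarrow> (real \<Rightarrow> real) \<Rightarrow> real \<Rightarrow> bool" where
  "tw_exists d J f c \<longleftrightarrow> (\<exists>\<phi> \<phi>'. bounded (range \<phi>) \<and>
     (\<forall>x y. x \<le> y \<longrightarrow> \<phi> y \<le> \<phi> x) \<and>
     (\<forall>x. (\<phi> has_real_derivative \<phi>' x) (at x)) \<and>
     (\<forall>x. d * (\<integral>y. J (x - y) * \<phi> y \<partial>lborel) - d * \<phi> x + c * \<phi>' x + f (\<phi> x) = 0) \<and>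
     (\<phi> \<longlongrightarrow> 1) at_bot \<and> (\<phi> \<longlongrightarrow> 0) at_top)"

definition semi_wave :: "real \<Rightarrow> (real \<Rightarrow> real) \<Rightarrow> (real \<Rightarrow> real) \<Rightarrow> real \<Rightarrow> (real \<Rightarrow> real) \<Rightarrow> bool" where
  "semi_wave d J f c \<phi> \<longleftrightarrow> (\<exists>\<phi>'.
     (\<forall>x\<le>0. (\<phi> has_real_derivative \<phi>' x) (at x within {..0})) \<and> continuous_on {..0} \<phi>' \<and>
     (\<forall>x\<le>0. 0 \<le> \<phi> x \<and> \<phi> x \<le> 1) \<and>
     (\<forall>x<0. d * (LINT y:{..0}|lborel. J (x - y) * \<phi> y) - d * \<phi> x + c * \<phi>' x + f (\<phi> x) = 0) \<and>
     (\<phi> \<longlongrightarrow> 1) at_bot \<and> \<phi> 0 = 0)"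

end

theory Submission
  imports Defs "HOL-Complex_Analysis.Great_Picard"
begin

text \<open>For \<open>0 < \<theta> \<le> 1/2\<close>, the problem \<open>c \<phi>' + wave_op \<phi> = 0\<close> on \<open>(-\<infinity>, 0)\<close> with
  \<open>\<phi> = \<theta>\<close> on \<open>[0, \<infinity>)\<close> is solved by monotone iteration: adding \<open>K \<phi>\<close> to both sides
  makes the right-hand side monotone in \<open>\<phi>\<close>, so the corresponding integral map is order
  preserving on nonincreasing functions between \<open>\<theta>\<close> and \<open>1\<close>, and the supremum of its
  subsolutions is a fixed point. These approximate semi-waves are uniformly Lipschitz, so as
  \<open>\<theta> \<rightarrow> 0\<close> a subsequence converges to a nonincreasing \<open>\<Phi>\<close> that vanishes on \<open>[0, \<infinity>)\<close>
  and solves the equation in integrated form. A bounded monotone solution tends to zeros of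
  \<open>f\<close> at \<open>\<plusminus>\<infinity>\<close>, so if \<open>\<Phi> \<noteq> 0\<close> it is a semi-wave. If \<open>\<Phi> = 0\<close>, the approximations
  recentred at their \<open>1/2\<close>-level converge instead to a travelling wave of speed \<open>c\<close>,
  which does not exist for \<open>c < c\<^sub>*\<close>.\<close>

lemma antimono_tendsto_Sup_at_bot:
  fixes U :: "'a::linorder \<Rightarrow> 'b::{conditionally_complete_linorder, linorder_topology}"
  assumes "antimono U" and bdd: "bdd_above (range U)"
  shows "(U \<longlongrightarrow> (SUP x. U x)) at_bot"
proof (rule order_tendstoI)
  fix a assume "a < (SUP x. U x)"
  then obtain x0 where "a < U x0" using less_cSUP_iff[OF _ bdd] by blast
  then show "eventually (\<lambda>y. a < U y) at_bot"
    using \<open>antimono U\<close> by (auto simp: eventually_at_bot_linorder dest: antimonoD intro: less_le_trans)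
next
  fix a assume "(SUP x. U x) < a"
  then show "eventually (\<lambda>y. U y < a) at_bot"
    using cSUP_upper[OF _ bdd] by (intro always_eventually) (meson UNIV_I le_less_trans)
qed

lemma antimono_tendsto_Inf_at_top:
  fixes U :: "'a::linorder \<Rightarrow> 'b::{conditionally_complete_linorder, linorder_topology}"
  assumes "antimono U" and bdd: "bdd_below (range U)"
  shows "(U \<longlongrightarrow> (INF x. U x)) at_top"
proof (rule order_tendstoI)
  fix a assume "(INF x. U x) < a"
  then obtain x0 where "U x0 < a" using cINF_less_iff[OF _ bdd] by blast
  then show "eventually (\<lambda>y. U y < a) at_top"
    using \<open>antimono U\<close> by (auto simp: eventually_at_top_linorder dest: antimonoD intro: le_less_trans)
next
  fix a assume "a < (INF x. U x)"
  then show "eventually (\<lambda>y. a < U y) at_top"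
    using cINF_lower[OF bdd] by (intro always_eventually) (meson UNIV_I less_le_trans)
qed

text \<open>By the mean value theorem, \<open>u'\<close> takes on \<open>(x, x + 1)\<close> the value \<open>u (x + 1) - u x\<close>,
  which tends to \<open>0\<close>.\<close>

lemma has_real_derivative_tendsto_zero_at_top:
  fixes u u' :: "real \<Rightarrow> real"
  assumes lim: "(u \<longlongrightarrow> l) at_top" and lim': "(u' \<longlongrightarrow> L) at_top"
    and deriv: "\<forall>\<^sub>F x in at_top. (u has_real_derivative u' x) (at x)"
  shows "L = 0"
proof (rule ccontr)
  assume "L \<noteq> 0"
  then have "\<forall>\<^sub>F x in at_top. \<bar>u' x - L\<bar> < \<bar>L\<bar> / 2"
    using tendstoD[OF lim', of "\<bar>L\<bar> / 2"] by (simp add: dist_real_def)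
  with deriv have "\<forall>\<^sub>F x in at_top.
      (u has_real_derivative u' x) (at x) \<and> \<bar>u' x - L\<bar> < \<bar>L\<bar> / 2"
    by (rule eventually_conj)
  then obtain x0 where x0: "\<And>x. x \<ge> x0 \<Longrightarrow>
      (u has_real_derivative u' x) (at x) \<and> \<bar>u' x - L\<bar> < \<bar>L\<bar> / 2"
    by (auto simp: eventually_at_top_linorder)
  have "filterlim (\<lambda>x. x + 1) at_top (at_top :: real filter)"
    using filterlim_tendsto_add_at_top[OF tendsto_const filterlim_ident, of 1] by (simp add: add.commute)
  then have "((\<lambda>x. u (x + 1) - u x) \<longlongrightarrow> l - l) at_top"
    by (intro tendsto_diff lim filterlim_compose[OF lim])
  then have "\<forall>\<^sub>F x in at_top. \<bar>u (x + 1) - u x\<bar> < \<bar>L\<bar> / 2"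
    using tendstoD[of _ "l - l" at_top "\<bar>L\<bar> / 2"] \<open>L \<noteq> 0\<close> by (simp add: dist_real_def)
  then obtain x where x: "x \<ge> x0" "\<bar>u (x + 1) - u x\<bar> < \<bar>L\<bar> / 2"
    by (metis (mono_tags, lifting) eventually_at_top_linorder nle_le)
  obtain z where z: "x < z" "u (x + 1) - u x = u' z"
    using MVT2[of x "x + 1" u u'] x0 x(1) by force
  then show False using x0[of z] x by linarith
qed

lemma lipschitz_on_pointwise_limit:
  fixes u :: "nat \<Rightarrow> 'a::metric_space \<Rightarrow> 'b::metric_space"
  assumes "\<And>n. L-lipschitz_on S (u n)" and lim: "\<And>x. x \<in> S \<Longrightarrow> (\<lambda>n. u n x) \<longlonglongrightarrow> U x"
  shows "L-lipschitz_on S U"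
proof (rule lipschitz_onI)
  show "0 \<le> L" using assms(1) by (rule lipschitz_on_nonneg)
  fix x y assume "x \<in> S" "y \<in> S"
  then have "(\<lambda>n. dist (u n x) (u n y)) \<longlonglongrightarrow> dist (U x) (U y)"
    by (intro tendsto_dist lim)
  then show "dist (U x) (U y) \<le> L * dist x y"
    by (rule LIMSEQ_le_const2) (use assms(1) \<open>x \<in> S\<close> \<open>y \<in> S\<close> in \<open>auto intro: lipschitz_onD\<close>)
qed

text \<open>A cheap Arzela-Ascoli: extract a subsequence converging on the rationals by
  diagonalisation, then everywhere by equi-Lipschitz continuity.\<close>

lemma lipschitz_bounded_pointwise_convergent_subseq:
  fixes u :: "nat \<Rightarrow> real \<Rightarrow> real"
  assumes bound: "\<And>n x. \<bar>u n x\<bar> \<le> M" and lip: "\<And>n. L-lipschitz_on UNIV (u n)"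
  obtains k U where "strict_mono k" "\<And>x. (\<lambda>n. u (k n) x) \<longlonglongrightarrow> U x"
proof -
  obtain k where k: "strict_mono k" and kq: "\<And>x. x \<in> \<rat> \<Longrightarrow> \<exists>l. (\<lambda>n. u (k n) x) \<longlonglongrightarrow> l"
    using function_convergent_subsequence[of \<rat> u M] countable_rat bound by auto
  have L: "L \<ge> 0" using lip by (rule lipschitz_on_nonneg)
  have "Cauchy (\<lambda>n. u (k n) x)" for x
  proof (rule metric_CauchyI)
    fix e :: real assume e: "0 < e"
    obtain q where q: "q \<in> \<rat>" "x < q" "q < x + e / (3 * (L + 1))"
      using Rats_dense_in_real[of x "x + e / (3 * (L + 1))"] e L by auto
    have Lq: "L * \<bar>x - q\<bar> \<le> e / 3"
    proof -
      have "L * \<bar>x - q\<bar> \<le> (L + 1) * (e / (3 * (L + 1)))"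
        using q L by (intro mult_mono) auto
      also have "\<dots> = e / 3" using L by (simp add: field_simps)
      finally show ?thesis .
    qed
    have near: "\<bar>u n x - u n q\<bar> \<le> e / 3" for n
      using lipschitz_onD[OF lip, of x q n] Lq by (simp add: dist_real_def)
    obtain l where "(\<lambda>n. u (k n) q) \<longlonglongrightarrow> l" using kq[OF q(1)] by blast
    then have "Cauchy (\<lambda>n. u (k n) q)" by (rule LIMSEQ_imp_Cauchy)
    then obtain N where N: "\<And>m n. N \<le> m \<Longrightarrow> N \<le> n \<Longrightarrow> dist (u (k m) q) (u (k n) q) < e / 3"
      using e metric_CauchyD[of _ "e / 3"] by (meson zero_less_divide_iff zero_less_numeral)
    show "\<exists>N. \<forall>m\<ge>N. \<forall>n\<ge>N. dist (u (k m) x) (u (k n) x) < e"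
    proof (intro exI allI impI)
      fix m n assume "N \<le> m" "N \<le> n"
      then show "dist (u (k m) x) (u (k n) x) < e"
        using N[of m n] near[of "k m"] near[of "k n"] unfolding dist_real_def by arith
    qed
  qed
  then have "\<forall>x. (\<lambda>n. u (k n) x) \<longlonglongrightarrow> lim (\<lambda>n. u (k n) x)"
    by (simp add: Cauchy_convergent_iff convergent_LIMSEQ_iff)
  then show ?thesis using that[OF k, of "\<lambda>x. lim (\<lambda>n. u (k n) x)"] by blast
qed

lemma lborel_integral_convolution_commute:
  fixes J \<phi> :: "real \<Rightarrow> real"
  shows "(\<integral>y. J (x - y) * \<phi> y \<partial>lborel) = (\<integral>z. J z * \<phi> (x - z) \<partial>lborel)"
  using lborel_integral_real_affine[of "-1" "\<lambda>y. J (x - y) * \<phi> y" x] by simp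

lemma antimono_level_tendsto_at_bot:
  fixes u :: "nat \<Rightarrow> real \<Rightarrow> real"
  assumes mono: "\<And>n. antimono (u n)" and level: "\<And>n. u n (s n) = y"
    and lim: "\<And>x. (\<lambda>n. u n x) \<longlonglongrightarrow> l" and "l < y"
  shows "filterlim s at_bot sequentially"
  unfolding filterlim_at_bot
proof
  fix Z :: real
  have "\<forall>\<^sub>F n in sequentially. u n Z < y" using order_tendstoD(2)[OF lim \<open>l < y\<close>] .
  then show "\<forall>\<^sub>F n in sequentially. s n \<le> Z"
  proof (rule eventually_mono)
    fix n assume "u n Z < y"
    show "s n \<le> Z"
    proof (rule ccontr)
      assume "\<not> s n \<le> Z"
      then have "u n (s n) \<le> u n Z" by (intro antimonoD[OF mono]) simp
      then show False using level[of n] \<open>u n Z < y\<close> by simp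
    qed
  qed
qed

lemma borel_measurable_antimono:
  fixes \<phi> :: "real \<Rightarrow> real"
  assumes "antimono \<phi>"
  shows "\<phi> \<in> borel_measurable borel"
proof -
  have "mono (\<lambda>x. - \<phi> x)" using assms by (auto simp: mono_def antimono_def)
  then have "(\<lambda>x. - \<phi> x) \<in> borel_measurable borel" by (rule borel_measurable_mono)
  then have "(\<lambda>x. - (- \<phi> x)) \<in> borel_measurable borel" by measurable
  then show ?thesis by simp
qed

section \<open>The nonlocal wave operator\<close>

locale semi_wave_setting =
  fixes d c K Lf :: real and J f :: "real \<Rightarrow> real"
  assumes d_nonneg: "0 \<le> d" and c_pos: "0 < c"
    and J_cont: "continuous_on UNIV J" and J_nonneg: "\<And>x. 0 \<le> J x"
    and J_integrable: "integrable lborel J" and J_integral: "(\<integral>x. J x \<partial>lborel) = 1"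
    and f_lipschitz: "Lf-lipschitz_on {0..1} f"
    and f0: "f 0 = 0" and f1: "f 1 = 0" and f_pos: "\<And>u. 0 < u \<Longrightarrow> u < 1 \<Longrightarrow> 0 < f u"
    and K_gt: "d + Lf < K"
begin

lemma K_pos: "0 < K"
  using d_nonneg lipschitz_on_nonneg[OF f_lipschitz] K_gt by linarith

lemma f_cont: "continuous_on {0..1} f"
  using f_lipschitz by (rule lipschitz_on_continuous_on)

lemma f_nonneg: "0 \<le> u \<Longrightarrow> u \<le> 1 \<Longrightarrow> 0 \<le> f u"
  using f_pos[of u] f0 f1 by (cases "u = 0 \<or> u = 1") (auto simp: less_eq_real_def)

lemma f_bound:
  assumes "0 \<le> u" "u \<le> 1"
  shows "\<bar>f u\<bar> \<le> Lf"
proof -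
  have "\<bar>f u\<bar> \<le> Lf * u"
    using lipschitz_onD[OF f_lipschitz, of u 0] f0 assms by (simp add: dist_real_def)
  also have "\<dots> \<le> Lf"
    using lipschitz_on_nonneg[OF f_lipschitz] assms by (simp add: mult_left_le)
  finally show ?thesis .
qed

lemma J_measurable[measurable]: "J \<in> borel_measurable borel"
  using J_cont by (rule borel_measurable_continuous_onI)

definition conv :: "(real \<Rightarrow> real) \<Rightarrow> real \<Rightarrow> real" where
  "conv \<phi> x = (\<integral>z. J z * \<phi> (x - z) \<partial>lborel)"

definition wave_op :: "(real \<Rightarrow> real) \<Rightarrow> real \<Rightarrow> real" where
  "wave_op \<phi> x = d * conv \<phi> x - d * \<phi> x + f (\<phi> x)"

text \<open>Since \<open>K\<close> exceeds \<open>d\<close> plus the Lipschitz constant of \<open>f\<close>, adding \<open>K \<phi>\<close> makes the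
  operator monotone in \<open>\<phi>\<close>.\<close>

definition shifted_wave_op :: "(real \<Rightarrow> real) \<Rightarrow> real \<Rightarrow> real" where
  "shifted_wave_op \<phi> x = wave_op \<phi> x + K * \<phi> x"

lemma shifted_wave_op_eq: "shifted_wave_op \<phi> x = d * conv \<phi> x + ((K - d) * \<phi> x + f (\<phi> x))"
  unfolding shifted_wave_op_def wave_op_def by (simp add: algebra_simps)

lemma conv_integrable:
  assumes [measurable]: "\<phi> \<in> borel_measurable borel" and bound: "\<And>x. \<bar>\<phi> x\<bar> \<le> B"
  shows "integrable lborel (\<lambda>z. J z * \<phi> (x - z))"
proof (rule Bochner_Integration.integrable_bound)
  show "integrable lborel (\<lambda>z. J z * B)" using J_integrable by simp
  have "(\<lambda>z. \<phi> (x - z)) \<in> borel_measurable borel"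
    by (rule measurable_compose[OF _ assms(1)]) simp
  then show "(\<lambda>z. J z * \<phi> (x - z)) \<in> borel_measurable lborel" by simp
  show "AE z in lborel. norm (J z * \<phi> (x - z)) \<le> norm (J z * B)"
  proof (rule AE_I2)
    fix z
    have "J z * \<bar>\<phi> (x - z)\<bar> \<le> J z * \<bar>B\<bar>"
      using bound[of "x - z"] J_nonneg[of z] by (intro mult_left_mono) auto
    then show "norm (J z * \<phi> (x - z)) \<le> norm (J z * B)" using J_nonneg[of z] by (simp add: abs_mult)
  qed
qed

lemma conv_mono:
  assumes "\<phi> \<in> borel_measurable borel" "\<And>x. \<bar>\<phi> x\<bar> \<le> B"
    and "\<psi> \<in> borel_measurable borel" "\<And>x. \<bar>\<psi> x\<bar> \<le> B'"
    and le: "\<And>x. \<phi> x \<le> \<psi> x"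
  shows "conv \<phi> x \<le> conv \<psi> x"
  unfolding conv_def
  by (rule integral_mono[OF conv_integrable[OF assms(1,2)] conv_integrable[OF assms(3,4)]])
     (simp add: J_nonneg le mult_left_mono)

lemma conv_const: "conv (\<lambda>_. a) x = a"
  unfolding conv_def using J_integral by simp

lemma conv_bounds:
  assumes "\<phi> \<in> borel_measurable borel" "\<And>x. a \<le> \<phi> x" "\<And>x. \<phi> x \<le> b"
  shows "a \<le> conv \<phi> x" "conv \<phi> x \<le> b"
proof -
  have B: "\<bar>\<phi> y\<bar> \<le> \<bar>a\<bar> + \<bar>b\<bar>" for y using assms(2,3)[of y] by auto
  show "a \<le> conv \<phi> x" using conv_mono[of "\<lambda>_. a" "\<bar>a\<bar>" \<phi>, OF _ _ assms(1) B assms(2)] conv_const by simp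
  show "conv \<phi> x \<le> b" using conv_mono[of \<phi> _ "\<lambda>_. b" "\<bar>b\<bar>", OF assms(1) B _ _ assms(3)] conv_const by simp
qed

lemma conv_antimono:
  assumes "antimono \<phi>" and bound: "\<And>x. \<bar>\<phi> x\<bar> \<le> B"
  shows "antimono (conv \<phi>)"
proof
  fix x y :: real assume "x \<le> y"
  have [measurable]: "\<phi> \<in> borel_measurable borel" using assms(1) by (rule borel_measurable_antimono)
  show "conv \<phi> y \<le> conv \<phi> x" unfolding conv_def
    by (rule integral_mono[OF conv_integrable[OF _ bound] conv_integrable[OF _ bound]])
       (use \<open>x \<le> y\<close> assms(1) in \<open>auto simp: J_nonneg antimono_def intro!: mult_left_mono\<close>)
qed

lemma conv_lipschitz:
  assumes lip: "L-lipschitz_on UNIV \<phi>" and bound: "\<And>x. \<bar>\<phi> x\<bar> \<le> B"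
  shows "L-lipschitz_on UNIV (conv \<phi>)"
proof (rule lipschitz_onI)
  show "0 \<le> L" using lip by (rule lipschitz_on_nonneg)
  fix x y :: real
  have m: "\<phi> \<in> borel_measurable borel"
    using lipschitz_on_continuous_on[OF lip] by (rule borel_measurable_continuous_onI)
  have diff: "\<bar>J z * \<phi> (x - z) - J z * \<phi> (y - z)\<bar> \<le> J z * (L * \<bar>x - y\<bar>)" for z
  proof -
    have "\<bar>\<phi> (x - z) - \<phi> (y - z)\<bar> \<le> L * \<bar>x - y\<bar>"
      using lipschitz_onD[OF lip, of "x - z" "y - z"] by (simp add: dist_real_def)
    then show ?thesis
      using J_nonneg[of z] by (simp add: abs_mult mult_left_mono flip: right_diff_distrib)
  qed
  have "\<bar>conv \<phi> x - conv \<phi> y\<bar> = \<bar>\<integral>z. J z * \<phi> (x - z) - J z * \<phi> (y - z) \<partial>lborel\<bar>"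
    unfolding conv_def
    by (simp add: Bochner_Integration.integral_diff[OF conv_integrable[OF m bound] conv_integrable[OF m bound]])
  also have "\<dots> \<le> (\<integral>z. J z * (L * \<bar>x - y\<bar>) \<partial>lborel)"
    using diff J_integrable conv_integrable[OF m bound]
    by (intro integral_abs_bound_integral Bochner_Integration.integrable_diff) auto
  also have "\<dots> = L * \<bar>x - y\<bar>" using J_integral by simp
  finally show "dist (conv \<phi> x) (conv \<phi> y) \<le> L * dist x y" by (simp add: dist_real_def)
qed

lemma conv_shift: "conv (\<lambda>x. \<phi> (x + s)) y = conv \<phi> (y + s)"
  unfolding conv_def by (simp add: algebra_simps)

lemma conv_tendsto:
  assumes "\<And>n. v n \<in> borel_measurable borel" "V \<in> borel_measurable borel"
    and "\<And>n x. \<bar>v n x\<bar> \<le> 1" and "\<And>x. (\<lambda>n. v n x) \<longlonglongrightarrow> V x"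
  shows "(\<lambda>n. conv (v n) y) \<longlonglongrightarrow> conv V y"
  unfolding conv_def
proof (rule integral_dominated_convergence[where w = J])
  have "(\<lambda>z. y - z) \<in> borel_measurable borel" by simp
  then show "(\<lambda>z. J z * V (y - z)) \<in> borel_measurable lborel"
    "(\<lambda>z. J z * v n (y - z)) \<in> borel_measurable lborel" for n
    using assms(1,2) by (auto intro: measurable_compose)
  show "AE z in lborel. (\<lambda>n. J z * v n (y - z)) \<longlonglongrightarrow> J z * V (y - z)"
    using assms(4) by (intro AE_I2 tendsto_intros)
  show "AE z in lborel. norm (J z * v n (y - z)) \<le> J z" for n
  proof (rule AE_I2)
    fix z
    show "norm (J z * v n (y - z)) \<le> J z"
      using assms(3)[of n "y - z"] J_nonneg[of z] by (simp add: abs_mult mult_left_le)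
  qed
qed (rule J_integrable)

section \<open>Monotone iteration for approximate semi-waves\<close>

definition admissible :: "real \<Rightarrow> (real \<Rightarrow> real) \<Rightarrow> bool" where
  "admissible \<theta> \<phi> \<longleftrightarrow> antimono \<phi> \<and> (\<forall>x. \<theta> \<le> \<phi> x \<and> \<phi> x \<le> 1) \<and> (\<forall>x\<ge>0. \<phi> x = \<theta>)"

definition wave_integrand :: "(real \<Rightarrow> real) \<Rightarrow> real \<Rightarrow> real" where
  "wave_integrand \<phi> y = exp (- (K * y / c)) * shifted_wave_op \<phi> y"

text \<open>\<open>semi_wave_map \<theta> \<phi>\<close> solves \<open>c \<psi>' = K \<psi> - shifted_wave_op \<phi>\<close> on \<open>(-\<infinity>, 0]\<close> with
  \<open>\<psi> 0 = \<theta>\<close>, and is extended by \<open>\<theta>\<close> to \<open>[0, \<infinity>)\<close>. Its fixed points therefore solve the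
  semi-wave equation on \<open>(-\<infinity>, 0)\<close> with boundary value \<open>\<theta>\<close>.\<close>

definition semi_wave_map :: "real \<Rightarrow> (real \<Rightarrow> real) \<Rightarrow> real \<Rightarrow> real" where
  "semi_wave_map \<theta> \<phi> x =
     (if x \<le> 0 then exp (K * x / c) * (\<theta> + integral {x..0} (wave_integrand \<phi>) / c) else \<theta>)"

lemma admissible_measurable: "admissible \<theta> \<phi> \<Longrightarrow> \<phi> \<in> borel_measurable borel"
  unfolding admissible_def by (auto intro: borel_measurable_antimono)

lemma admissible_abs_le: "admissible \<theta> \<phi> \<Longrightarrow> 0 \<le> \<theta> \<Longrightarrow> \<bar>\<phi> x\<bar> \<le> 1"
  unfolding admissible_def by (metis abs_of_nonneg order_trans)

lemma reaction_mono:
  assumes "0 \<le> u" "u \<le> v" "v \<le> 1"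
  shows "(K - d) * u + f u \<le> (K - d) * v + f v"
proof -
  have "f u - f v \<le> Lf * (v - u)"
    using lipschitz_onD[OF f_lipschitz, of v u] assms by (simp add: dist_real_def)
  also have "\<dots> \<le> (K - d) * (v - u)" using K_gt assms by (intro mult_right_mono) auto
  finally show ?thesis by (simp add: algebra_simps)
qed

lemma shifted_wave_op_bounds:
  assumes adm: "admissible \<theta> \<phi>" and \<theta>: "0 \<le> \<theta>" "\<theta> \<le> 1"
  shows "K * \<theta> \<le> shifted_wave_op \<phi> y" "shifted_wave_op \<phi> y \<le> K"
proof -
  have b: "\<And>x. \<theta> \<le> \<phi> x" "\<And>x. \<phi> x \<le> 1" using adm unfolding admissible_def by auto
  have "\<theta> \<le> conv \<phi> y" "conv \<phi> y \<le> 1" using conv_bounds[OF admissible_measurable[OF adm] b] by auto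
  then have "d * \<theta> \<le> d * conv \<phi> y" "d * conv \<phi> y \<le> d" using d_nonneg by (auto intro: mult_left_mono simp: mult_left_le)
  moreover have "(K - d) * \<theta> + f \<theta> \<le> (K - d) * \<phi> y + f (\<phi> y)"
    "(K - d) * \<phi> y + f (\<phi> y) \<le> (K - d) * 1 + f 1"
    using reaction_mono \<theta> b by (meson order_trans order_refl)+
  ultimately show "K * \<theta> \<le> shifted_wave_op \<phi> y" "shifted_wave_op \<phi> y \<le> K"
    unfolding shifted_wave_op_eq using f_nonneg[OF \<theta>] f1 by (auto simp: algebra_simps)
qed

lemma shifted_wave_op_nonneg: "admissible \<theta> \<phi> \<Longrightarrow> 0 \<le> \<theta> \<Longrightarrow> \<theta> \<le> 1 \<Longrightarrow> 0 \<le> shifted_wave_op \<phi> y"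
  using shifted_wave_op_bounds(1)[of \<theta> \<phi> y] K_pos by (meson mult_nonneg_nonneg less_imp_le order_trans)

lemma shifted_wave_op_antimono:
  assumes adm: "admissible \<theta> \<phi>" and \<theta>: "0 \<le> \<theta>" "\<theta> \<le> 1"
  shows "antimono (shifted_wave_op \<phi>)"
proof
  fix x y :: real assume "x \<le> y"
  have mono: "antimono \<phi>" and b: "\<And>x. \<theta> \<le> \<phi> x" "\<And>x. \<phi> x \<le> 1"
    using adm unfolding admissible_def by auto
  have "conv \<phi> y \<le> conv \<phi> x"
    using conv_antimono[OF mono admissible_abs_le[OF adm \<theta>(1)]] \<open>x \<le> y\<close> by (rule antimonoD)
  moreover have "(K - d) * \<phi> y + f (\<phi> y) \<le> (K - d) * \<phi> x + f (\<phi> x)"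
    using reaction_mono[of "\<phi> y" "\<phi> x"] b \<theta> antimonoD[OF mono \<open>x \<le> y\<close>] by (meson order_trans)
  ultimately show "shifted_wave_op \<phi> y \<le> shifted_wave_op \<phi> x"
    unfolding shifted_wave_op_eq by (rule add_mono[OF mult_left_mono[OF _ d_nonneg]])
qed

lemma shifted_wave_op_mono:
  assumes adm: "admissible \<theta> \<phi>" "admissible \<theta>' \<psi>" and \<theta>: "0 \<le> \<theta>" "0 \<le> \<theta>'"
    and le: "\<And>x. \<phi> x \<le> \<psi> x"
  shows "shifted_wave_op \<phi> y \<le> shifted_wave_op \<psi> y"
proof -
  have "conv \<phi> y \<le> conv \<psi> y"
    by (rule conv_mono[OF admissible_measurable[OF adm(1)] admissible_abs_le[OF adm(1) \<theta>(1)]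
          admissible_measurable[OF adm(2)] admissible_abs_le[OF adm(2) \<theta>(2)] le])
  moreover have "(K - d) * \<phi> y + f (\<phi> y) \<le> (K - d) * \<psi> y + f (\<psi> y)"
    using reaction_mono[of "\<phi> y" "\<psi> y"] adm \<theta> le unfolding admissible_def by (meson order_trans)
  ultimately show ?thesis
    unfolding shifted_wave_op_eq by (rule add_mono[OF mult_left_mono[OF _ d_nonneg]])
qed

lemma wave_integrand_integrable:
  assumes adm: "admissible \<theta> \<phi>" and \<theta>: "0 \<le> \<theta>" "\<theta> \<le> 1"
  shows "wave_integrand \<phi> integrable_on {a..b}"
proof -
  have "antimono (wave_integrand \<phi>)"
  proof
    fix x y :: real assume "x \<le> y"
    then have "exp (- (K * y / c)) \<le> exp (- (K * x / c))"
      using K_pos c_pos by (simp add: divide_right_mono mult_left_mono)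
    then show "wave_integrand \<phi> y \<le> wave_integrand \<phi> x" unfolding wave_integrand_def
      using antimonoD[OF shifted_wave_op_antimono[OF assms] \<open>x \<le> y\<close>] shifted_wave_op_nonneg[OF assms]
      by (intro mult_mono) auto
  qed
  then have "mono_on {a..b} (\<lambda>y. - wave_integrand \<phi> y)"
    by (auto simp: monotone_on_def antimono_def)
  then have "(\<lambda>y. - wave_integrand \<phi> y) integrable_on {a..b}" by (rule integrable_on_mono_on)
  then show ?thesis using integrable_neg by fastforce
qed

lemma integral_exp_weight:
  assumes "x1 \<le> x2"
  shows "exp (K * x1 / c) * integral {x1..x2} (\<lambda>y. exp (- (K * y / c))) / c
    = (1 - exp (K * (x1 - x2) / c)) / K"
proof -
  define I where "I = integral {x1..x2} (\<lambda>y. exp (- (K * y / c)))"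
  have "((\<lambda>y. exp (- (K * y / c))) has_integral
          (- (c / K) * exp (- (K * x2 / c))) - (- (c / K) * exp (- (K * x1 / c)))) {x1..x2}"
  proof (rule fundamental_theorem_of_calculus[OF assms])
    fix x assume "x \<in> {x1..x2}"
    have "((\<lambda>y. - (c / K) * exp (- (K / c) * y)) has_real_derivative
           - (c / K) * (exp (- (K / c) * x) * - (K / c))) (at x within {x1..x2})"
      by (intro DERIV_cmult DERIV_chain2[OF DERIV_exp] DERIV_cmult_Id)
    then show "((\<lambda>y. - (c / K) * exp (- (K * y / c))) has_vector_derivative exp (- (K * x / c)))
        (at x within {x1..x2})"
      using K_pos c_pos by (simp add: has_real_derivative_iff_has_vector_derivative field_simps)
  qed
  then have I: "I = c / K * (exp (- (K * x1 / c)) - exp (- (K * x2 / c)))"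
    unfolding I_def by (simp add: integral_unique algebra_simps)
  have "exp (K * x1 / c) * exp (- (K * x2 / c)) = exp (K * (x1 - x2) / c)"
    by (simp add: exp_add[symmetric] diff_divide_distrib right_diff_distrib)
  moreover have "exp (K * x1 / c) * I / c
      = (exp (K * x1 / c) * exp (- (K * x1 / c)) - exp (K * x1 / c) * exp (- (K * x2 / c))) / K"
    unfolding I using c_pos K_pos by (simp add: field_simps)
  ultimately show ?thesis unfolding I_def by (simp add: exp_minus_inverse)
qed

lemma wave_integrand_integral_bounds:
  assumes adm: "admissible \<theta> \<phi>" and \<theta>: "0 \<le> \<theta>" "\<theta> \<le> 1" and x: "x1 \<le> x2"
    and mM: "\<And>y. y \<in> {x1..x2} \<Longrightarrow> m \<le> shifted_wave_op \<phi> y \<and> shifted_wave_op \<phi> y \<le> M"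
  shows "m / K * (1 - exp (K * (x1 - x2) / c)) \<le> exp (K * x1 / c) * integral {x1..x2} (wave_integrand \<phi>) / c"
    "exp (K * x1 / c) * integral {x1..x2} (wave_integrand \<phi>) / c \<le> M / K * (1 - exp (K * (x1 - x2) / c))"
proof -
  define P where "P = exp (K * x1 / c) / c"
  define I where "I = integral {x1..x2} (\<lambda>y. exp (- (K * y / c)))"
  define W where "W = integral {x1..x2} (wave_integrand \<phi>)"
  have P: "0 < P" using c_pos by (simp add: P_def)
  have PW: "exp (K * x1 / c) * W / c = P * W" by (simp add: P_def)
  have "P * I = (1 - exp (K * (x1 - x2) / c)) / K"
    using integral_exp_weight[OF x] by (simp add: P_def I_def)
  then have PI: "m / K * (1 - exp (K * (x1 - x2) / c)) = P * (m * I)" for m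
    by (simp add: mult.left_commute[of P])
  have ie: "(\<lambda>y. exp (- (K * y / c))) integrable_on {x1..x2}"
    by (rule integrable_continuous_real) (use c_pos in \<open>auto intro!: continuous_intros\<close>)
  have "integral {x1..x2} (\<lambda>y. m * exp (- (K * y / c))) \<le> W"
    unfolding W_def
    by (rule integral_le[OF integrable_on_mult_right[OF ie] wave_integrand_integrable[OF adm \<theta>]])
       (use mM in \<open>auto simp: wave_integrand_def mult.commute intro!: mult_right_mono\<close>)
  moreover have "W \<le> integral {x1..x2} (\<lambda>y. M * exp (- (K * y / c)))"
    unfolding W_def
    by (rule integral_le[OF wave_integrand_integrable[OF adm \<theta>] integrable_on_mult_right[OF ie]])
       (use mM in \<open>auto simp: wave_integrand_def mult.commute intro!: mult_right_mono\<close>)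
  ultimately have "P * (m * I) \<le> P * W" "P * W \<le> P * (M * I)"
    using P unfolding I_def by (auto intro: mult_left_mono)
  then show "m / K * (1 - exp (K * (x1 - x2) / c)) \<le> exp (K * x1 / c) * integral {x1..x2} (wave_integrand \<phi>) / c"
    "exp (K * x1 / c) * integral {x1..x2} (wave_integrand \<phi>) / c \<le> M / K * (1 - exp (K * (x1 - x2) / c))"
    unfolding PI W_def[symmetric] PW by auto
qed

lemma semi_wave_map_at_nonneg: "0 \<le> x \<Longrightarrow> semi_wave_map \<theta> \<phi> x = \<theta>"
  unfolding semi_wave_map_def by auto

lemma semi_wave_map_split:
  assumes adm: "admissible \<theta> \<phi>" and \<theta>: "0 \<le> \<theta>" "\<theta> \<le> 1" and x: "x1 \<le> x2" "x2 \<le> 0"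
  shows "semi_wave_map \<theta> \<phi> x1 = exp (K * (x1 - x2) / c) * semi_wave_map \<theta> \<phi> x2
    + exp (K * x1 / c) * integral {x1..x2} (wave_integrand \<phi>) / c"
proof -
  have "integral {x1..0} (wave_integrand \<phi>)
      = integral {x1..x2} (wave_integrand \<phi>) + integral {x2..0} (wave_integrand \<phi>)"
    by (rule Henstock_Kurzweil_Integration.integral_combine[OF x wave_integrand_integrable[OF adm \<theta>], symmetric])
  moreover have "exp (K * x1 / c) = exp (K * (x1 - x2) / c) * exp (K * x2 / c)"
    by (simp add: exp_add[symmetric] add_divide_distrib[symmetric] algebra_simps)
  ultimately show ?thesis
    using x c_pos unfolding semi_wave_map_def by (simp add: field_simps)
qed

lemma semi_wave_map_at_nonpos:
  assumes "admissible \<theta> \<phi>" "0 \<le> \<theta>" "\<theta> \<le> 1" "x \<le> 0"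
  shows "semi_wave_map \<theta> \<phi> x = exp (K * x / c) * \<theta> + exp (K * x / c) * integral {x..0} (wave_integrand \<phi>) / c"
  using semi_wave_map_split[OF assms order_refl] semi_wave_map_at_nonneg[of 0] by simp

lemma exp_scaled_le_one: "x \<le> 0 \<Longrightarrow> exp (K * x / c) \<le> 1"
  using K_pos c_pos by (simp add: divide_nonpos_pos mult_nonneg_nonpos)

lemma semi_wave_map_bounds:
  assumes adm: "admissible \<theta> \<phi>" and \<theta>: "0 \<le> \<theta>" "\<theta> \<le> 1"
  shows "\<theta> \<le> semi_wave_map \<theta> \<phi> x \<and> semi_wave_map \<theta> \<phi> x \<le> 1"
proof (cases "x \<le> 0")
  case False then show ?thesis using semi_wave_map_at_nonneg[of x] \<theta> by auto
next
  case True
  define q where "q = exp (K * x / c)"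
  have q: "q \<le> 1" "0 < q" using exp_scaled_le_one[OF True] by (simp_all add: q_def)
  have "K * \<theta> / K = \<theta>" "K / K = 1" using K_pos by auto
  then have "\<theta> * (1 - q) \<le> exp (K * x / c) * integral {x..0} (wave_integrand \<phi>) / c"
    "exp (K * x / c) * integral {x..0} (wave_integrand \<phi>) / c \<le> 1 - q"
    using wave_integrand_integral_bounds[OF adm \<theta> True, of "K * \<theta>" K] shifted_wave_op_bounds[OF adm \<theta>]
    unfolding q_def by auto
  moreover have "q * \<theta> \<le> q" using q \<theta> by (simp add: mult_left_le)
  ultimately show ?thesis
    using semi_wave_map_at_nonpos[OF adm \<theta> True] unfolding q_def[symmetric] by (auto simp: algebra_simps)
qed

lemma semi_wave_map_le_shifted_wave_op:
  assumes adm: "admissible \<theta> \<phi>" and \<theta>: "0 \<le> \<theta>" "\<theta> \<le> 1" and x: "x \<le> 0"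
  shows "semi_wave_map \<theta> \<phi> x \<le> shifted_wave_op \<phi> x / K"
proof -
  have mM: "K * \<theta> \<le> shifted_wave_op \<phi> y \<and> shifted_wave_op \<phi> y \<le> shifted_wave_op \<phi> x"
    if "y \<in> {x..0}" for y
    using shifted_wave_op_bounds[OF adm \<theta>] antimonoD[OF shifted_wave_op_antimono[OF adm \<theta>], of x y] that
    by auto
  define q where "q = exp (K * x / c)"
  have q: "q \<le> 1" "0 < q" using exp_scaled_le_one[OF x] by (simp_all add: q_def)
  have \<theta>G: "\<theta> \<le> shifted_wave_op \<phi> x / K"
    using shifted_wave_op_bounds(1)[OF adm \<theta>, of x] K_pos by (simp add: field_simps)
  have "semi_wave_map \<theta> \<phi> x = q * \<theta> + exp (K * x / c) * integral {x..0} (wave_integrand \<phi>) / c"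
    using semi_wave_map_at_nonpos[OF adm \<theta> x] unfolding q_def by simp
  also have "\<dots> \<le> q * (shifted_wave_op \<phi> x / K) + shifted_wave_op \<phi> x / K * (1 - q)"
    using wave_integrand_integral_bounds(2)[OF adm \<theta> x mM] \<theta>G q unfolding q_def
    by (intro add_mono mult_left_mono) auto
  also have "\<dots> = shifted_wave_op \<phi> x / K" using K_pos by (simp add: field_simps)
  finally show ?thesis .
qed

lemma semi_wave_map_antimono:
  assumes adm: "admissible \<theta> \<phi>" and \<theta>: "0 \<le> \<theta>" "\<theta> \<le> 1"
  shows "antimono (semi_wave_map \<theta> \<phi>)"
proof
  fix x1 x2 :: real assume x: "x1 \<le> x2"
  show "semi_wave_map \<theta> \<phi> x2 \<le> semi_wave_map \<theta> \<phi> x1"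
  proof (cases "x2 \<le> 0")
    case False then show ?thesis using semi_wave_map_at_nonneg[of x2] semi_wave_map_bounds[OF adm \<theta>] by auto
  next
    case True
    have mM: "shifted_wave_op \<phi> x2 \<le> shifted_wave_op \<phi> y \<and> shifted_wave_op \<phi> y \<le> K"
      if "y \<in> {x1..x2}" for y
      using shifted_wave_op_bounds[OF adm \<theta>] antimonoD[OF shifted_wave_op_antimono[OF adm \<theta>], of y x2] that
      by auto
    define q where "q = exp (K * (x1 - x2) / c)"
    have q: "q \<le> 1" unfolding q_def using x by (intro exp_scaled_le_one) simp
    have "semi_wave_map \<theta> \<phi> x2 * (1 - q) \<le> shifted_wave_op \<phi> x2 / K * (1 - q)"
      using semi_wave_map_le_shifted_wave_op[OF adm \<theta> True] q by (intro mult_right_mono) auto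
    then have "semi_wave_map \<theta> \<phi> x2
        \<le> q * semi_wave_map \<theta> \<phi> x2 + exp (K * x1 / c) * integral {x1..x2} (wave_integrand \<phi>) / c"
      using wave_integrand_integral_bounds(1)[OF adm \<theta> x mM] unfolding q_def by (simp add: algebra_simps)
    also have "\<dots> = semi_wave_map \<theta> \<phi> x1"
      using semi_wave_map_split[OF adm \<theta> x True] unfolding q_def by simp
    finally show ?thesis .
  qed
qed

lemma semi_wave_map_admissible:
  assumes "admissible \<theta> \<phi>" "0 \<le> \<theta>" "\<theta> \<le> 1"
  shows "admissible \<theta> (semi_wave_map \<theta> \<phi>)"
  unfolding admissible_def
  using semi_wave_map_antimono[OF assms] semi_wave_map_bounds[OF assms] semi_wave_map_at_nonneg by auto

lemma semi_wave_map_mono: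
  assumes adm: "admissible \<theta> \<phi>" "admissible \<theta> \<psi>" and \<theta>: "0 \<le> \<theta>" "\<theta> \<le> 1"
    and le: "\<And>x. \<phi> x \<le> \<psi> x"
  shows "semi_wave_map \<theta> \<phi> x \<le> semi_wave_map \<theta> \<psi> x"
proof (cases "x \<le> 0")
  case True
  have "integral {x..0} (wave_integrand \<phi>) \<le> integral {x..0} (wave_integrand \<psi>)"
    by (rule integral_le[OF wave_integrand_integrable[OF adm(1) \<theta>] wave_integrand_integrable[OF adm(2) \<theta>]])
       (auto simp: wave_integrand_def intro!: mult_left_mono shifted_wave_op_mono[OF adm \<theta>(1) \<theta>(1) le])
  then show ?thesis
    using True c_pos unfolding semi_wave_map_def by (auto intro!: mult_left_mono divide_right_mono)
qed (simp add: semi_wave_map_def)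

lemma admissible_SUP:
  assumes ne: "A \<noteq> {}" and adm: "\<And>\<phi>. \<phi> \<in> A \<Longrightarrow> admissible \<theta> \<phi>"
  shows "admissible \<theta> (\<lambda>x. SUP \<phi>\<in>A. \<phi> x)"
proof -
  have bdd: "bdd_above ((\<lambda>\<phi>. \<phi> x) ` A)" for x
    using adm unfolding admissible_def by (intro bdd_aboveI[of _ 1]) auto
  show ?thesis
    unfolding admissible_def
  proof (intro conjI allI impI antimonoI)
    fix x y :: real assume "x \<le> y"
    show "(SUP \<phi>\<in>A. \<phi> y) \<le> (SUP \<phi>\<in>A. \<phi> x)"
      using adm \<open>x \<le> y\<close> unfolding admissible_def antimono_def
      by (intro cSUP_mono[OF ne bdd]) blast
  next
    fix x
    obtain \<phi> where "\<phi> \<in> A" using ne by blast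
    show "\<theta> \<le> (SUP \<phi>\<in>A. \<phi> x)"
      using adm[OF \<open>\<phi> \<in> A\<close>] cSUP_upper[OF \<open>\<phi> \<in> A\<close> bdd] unfolding admissible_def by (meson order_trans)
    show "(SUP \<phi>\<in>A. \<phi> x) \<le> 1"
      using adm unfolding admissible_def by (intro cSUP_least[OF ne]) auto
    show "(SUP \<phi>\<in>A. \<phi> x) = \<theta>" if "0 \<le> x"
    proof -
      have "(SUP \<phi>\<in>A. \<phi> x) = (SUP \<phi>\<in>A. \<theta>)"
        using adm that unfolding admissible_def by (intro SUP_cong) auto
      then show ?thesis using ne by simp
    qed
  qed
qed

text \<open>Knaster--Tarski: the pointwise supremum of all admissible \<open>\<phi> \<le> semi_wave_map \<theta> \<phi>\<close> is a
  fixed point, since \<open>semi_wave_map \<theta>\<close> is monotone on admissible functions.\<close>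

lemma semi_wave_map_has_fixed_point:
  assumes \<theta>: "0 \<le> \<theta>" "\<theta> \<le> 1"
  obtains \<phi> where "admissible \<theta> \<phi>" "semi_wave_map \<theta> \<phi> = \<phi>"
proof -
  define A where "A = {\<phi>. admissible \<theta> \<phi> \<and> (\<forall>x. \<phi> x \<le> semi_wave_map \<theta> \<phi> x)}"
  define s where "s x = (SUP \<phi>\<in>A. \<phi> x)" for x
  have const: "admissible \<theta> (\<lambda>_. \<theta>)" unfolding admissible_def using \<theta> by (auto intro: antimonoI)
  then have ne: "A \<noteq> {}" unfolding A_def using semi_wave_map_bounds[OF const \<theta>] by auto
  have s_adm: "admissible \<theta> s"
    unfolding s_def[abs_def] by (rule admissible_SUP[OF ne]) (simp add: A_def)
  have up: "\<phi> x \<le> s x" if "\<phi> \<in> A" for \<phi> x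
    using that unfolding s_def A_def admissible_def by (intro cSUP_upper bdd_aboveI[of _ 1]) auto
  have s_le: "s x \<le> semi_wave_map \<theta> s x" for x
    unfolding s_def[of x]
  proof (rule cSUP_least[OF ne])
    fix \<phi> assume "\<phi> \<in> A"
    then have "admissible \<theta> \<phi>" "\<phi> x \<le> semi_wave_map \<theta> \<phi> x" unfolding A_def by auto
    then show "\<phi> x \<le> semi_wave_map \<theta> s x"
      using semi_wave_map_mono[OF _ s_adm \<theta> up[OF \<open>\<phi> \<in> A\<close>], of x] by linarith
  qed
  have "semi_wave_map \<theta> s \<in> A"
    unfolding A_def using semi_wave_map_admissible[OF s_adm \<theta>]
      semi_wave_map_mono[OF s_adm semi_wave_map_admissible[OF s_adm \<theta>] \<theta> s_le] by auto
  then have "semi_wave_map \<theta> s x \<le> s x" for x by (rule up)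
  then have "semi_wave_map \<theta> s = s" using s_le by (intro ext antisym) auto
  with s_adm that show ?thesis by blast
qed

section \<open>Profiles and the integrated wave equation\<close>

definition wave_profile :: "real \<Rightarrow> (real \<Rightarrow> real) \<Rightarrow> bool" where
  "wave_profile L \<psi> \<longleftrightarrow> antimono \<psi> \<and> L-lipschitz_on UNIV \<psi> \<and> (\<forall>x. 0 \<le> \<psi> x \<and> \<psi> x \<le> 1)"

text \<open>The integrated form on \<open>[a, b]\<close> of \<open>c \<psi>' + wave_op \<psi> = 0\<close>, written as
  \<open>(exp (- K y / c) \<psi> y)' = - exp (- K y / c) shifted_wave_op \<psi> y / c\<close>. Unlike the
  differential form it is preserved under pointwise limits of profiles.\<close>

definition integrated_wave_eq :: "(real \<Rightarrow> real) \<Rightarrow> real \<Rightarrow> real \<Rightarrow> bool" where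
  "integrated_wave_eq \<psi> a b \<longleftrightarrow>
     \<psi> a * exp (- (K * a / c)) - \<psi> b * exp (- (K * b / c)) = integral {a..b} (wave_integrand \<psi>) / c"

lemma fixed_point_decrement:
  assumes adm: "admissible \<theta> \<phi>" and \<theta>: "0 \<le> \<theta>" "\<theta> \<le> 1" and fx: "semi_wave_map \<theta> \<phi> = \<phi>"
    and x: "x1 \<le> x2" "x2 \<le> 0"
  shows "\<phi> x1 - \<phi> x2 \<le> K / c * (x2 - x1)"
proof -
  have mM: "0 \<le> shifted_wave_op \<phi> y \<and> shifted_wave_op \<phi> y \<le> K" for y
    using shifted_wave_op_bounds[OF adm \<theta>, of y] shifted_wave_op_nonneg[OF adm \<theta>] by auto
  define q where "q = exp (K * (x1 - x2) / c)"
  have q: "q \<le> 1" using exp_scaled_le_one[of "x1 - x2"] x by (simp add: q_def)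
  have "\<phi> x1 = q * \<phi> x2 + exp (K * x1 / c) * integral {x1..x2} (wave_integrand \<phi>) / c"
    using semi_wave_map_split[OF adm \<theta> x] fx unfolding q_def by simp
  moreover have "exp (K * x1 / c) * integral {x1..x2} (wave_integrand \<phi>) / c \<le> 1 - q"
    using wave_integrand_integral_bounds(2)[OF adm \<theta> x(1) mM] K_pos unfolding q_def by simp
  moreover have "0 \<le> (1 - q) * \<phi> x2"
    using adm \<theta> q unfolding admissible_def by (meson diff_ge_0_iff_ge mult_nonneg_nonneg order_trans)
  ultimately have "\<phi> x1 - \<phi> x2 \<le> 1 - q" by (simp add: algebra_simps)
  also have "1 - q \<le> K / c * (x2 - x1)"
    using exp_ge_add_one_self[of "K * (x1 - x2) / c"] c_pos unfolding q_def by (simp add: field_simps)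
  finally show ?thesis .
qed

lemma fixed_point_lipschitz:
  assumes adm: "admissible \<theta> \<phi>" and \<theta>: "0 \<le> \<theta>" "\<theta> \<le> 1" and fx: "semi_wave_map \<theta> \<phi> = \<phi>"
  shows "(K / c)-lipschitz_on UNIV \<phi>"
proof (rule lipschitz_onI)
  show "0 \<le> K / c" using K_pos c_pos by simp
  have mono: "antimono \<phi>" and const: "\<And>x. 0 \<le> x \<Longrightarrow> \<phi> x = \<theta>"
    using adm unfolding admissible_def by auto
  have min0: "\<phi> x = \<phi> (min x 0)" for x using const[of x] const[of 0] by (cases "x \<le> 0") auto
  have le: "\<bar>\<phi> x1 - \<phi> x2\<bar> \<le> K / c * (x2 - x1)" if "x1 \<le> x2" for x1 x2
  proof -
    have "\<bar>\<phi> x1 - \<phi> x2\<bar> = \<phi> (min x1 0) - \<phi> (min x2 0)"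
      using antimonoD[OF mono that] min0[of x1] min0[of x2] by simp
    also have "\<dots> \<le> K / c * (min x2 0 - min x1 0)"
      using that by (intro fixed_point_decrement[OF adm \<theta> fx]) auto
    also have "\<dots> \<le> K / c * (x2 - x1)"
      using that K_pos c_pos by (intro mult_left_mono) (auto simp: min_def)
    finally show ?thesis .
  qed
  fix x y :: real
  show "dist (\<phi> x) (\<phi> y) \<le> K / c * dist x y"
  proof (cases "x \<le> y")
    case True then show ?thesis using le[of x y] by (simp add: dist_real_def)
  next
    case False then show ?thesis using le[of y x] by (simp add: dist_real_def abs_minus_commute)
  qed
qed

lemma fixed_point_integrated_wave_eq:
  assumes adm: "admissible \<theta> \<phi>" and \<theta>: "0 \<le> \<theta>" "\<theta> \<le> 1" and fx: "semi_wave_map \<theta> \<phi> = \<phi>"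
    and ab: "a \<le> b" "b \<le> 0"
  shows "integrated_wave_eq \<phi> a b"
proof -
  have "\<phi> a = exp (K * (a - b) / c) * \<phi> b + exp (K * a / c) * integral {a..b} (wave_integrand \<phi>) / c"
    using semi_wave_map_split[OF adm \<theta> ab] fx by simp
  moreover have "exp (K * (a - b) / c) * exp (- (K * a / c)) = exp (- (K * b / c))"
    by (simp add: exp_add[symmetric] diff_divide_distrib right_diff_distrib)
  moreover have "exp (K * a / c) * exp (- (K * a / c)) = 1" by (simp add: exp_minus_inverse)
  ultimately have "\<phi> a * exp (- (K * a / c)) = \<phi> b * exp (- (K * b / c))
      + integral {a..b} (wave_integrand \<phi>) / c"
    by (simp add: algebra_simps)
  then show ?thesis unfolding integrated_wave_eq_def by simp
qed

lemma semi_wave_approximation: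
  assumes "0 \<le> \<theta>" "\<theta> \<le> 1"
  shows "\<exists>\<phi>. wave_profile (K / c) \<phi> \<and> (\<forall>x\<ge>0. \<phi> x = \<theta>) \<and>
    (\<forall>a b. a \<le> b \<and> b \<le> 0 \<longrightarrow> integrated_wave_eq \<phi> a b)"
proof -
  obtain \<phi> where adm: "admissible \<theta> \<phi>" and fx: "semi_wave_map \<theta> \<phi> = \<phi>"
    using semi_wave_map_has_fixed_point[OF assms] by blast
  have "wave_profile (K / c) \<phi>"
    using adm assms fixed_point_lipschitz[OF adm assms fx]
    unfolding wave_profile_def admissible_def by (auto intro: order_trans)
  moreover have "\<forall>x\<ge>0. \<phi> x = \<theta>" using adm unfolding admissible_def by auto
  ultimately show ?thesis using fixed_point_integrated_wave_eq[OF adm assms fx] by blast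
qed

lemma wave_profile_continuous: "wave_profile L \<psi> \<Longrightarrow> continuous_on UNIV \<psi>"
  unfolding wave_profile_def by (auto intro: lipschitz_on_continuous_on)

lemma wave_profile_measurable: "wave_profile L \<psi> \<Longrightarrow> \<psi> \<in> borel_measurable borel"
  by (intro borel_measurable_continuous_onI wave_profile_continuous)

lemma wave_profile_abs_le: "wave_profile L \<psi> \<Longrightarrow> \<bar>\<psi> x\<bar> \<le> 1"
  unfolding wave_profile_def by (metis abs_of_nonneg)

lemma continuous_on_wave_op:
  assumes \<psi>: "wave_profile L \<psi>"
  shows "continuous_on UNIV (wave_op \<psi>)"
proof -
  have "L-lipschitz_on UNIV \<psi>" using \<psi> unfolding wave_profile_def by blast
  then have "continuous_on UNIV (conv \<psi>)"
    by (rule lipschitz_on_continuous_on[OF conv_lipschitz[OF _ wave_profile_abs_le[OF \<psi>]]])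
  moreover have "continuous_on UNIV (\<lambda>x. f (\<psi> x))"
    by (rule continuous_on_compose2[OF f_cont wave_profile_continuous[OF \<psi>]])
       (use \<psi> in \<open>auto simp: wave_profile_def\<close>)
  ultimately show ?thesis
    unfolding wave_op_def[abs_def] by (intro continuous_intros wave_profile_continuous[OF \<psi>])
qed

lemma continuous_on_wave_integrand: "wave_profile L \<psi> \<Longrightarrow> continuous_on UNIV (wave_integrand \<psi>)"
  unfolding wave_integrand_def[abs_def] shifted_wave_op_def[abs_def]
  by (intro continuous_intros continuous_on_wave_op wave_profile_continuous) (use c_pos in simp)

lemma variation_of_constants_has_derivative:
  fixes C :: real
  assumes cont: "continuous_on {a..B} (wave_integrand \<psi>)" and x: "x \<in> {a..B}"
  defines "F \<equiv> \<lambda>y. exp (K * y / c) * (C - integral {a..y} (wave_integrand \<psi>) / c)"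
  shows "(F has_real_derivative K / c * F x - shifted_wave_op \<psi> x / c) (at x within {a..B})"
proof -
  have "((\<lambda>y. integral {a..y} (wave_integrand \<psi>)) has_real_derivative wave_integrand \<psi> x) (at x within {a..B})"
    using integral_has_vector_derivative[OF cont x] by (simp add: has_real_derivative_iff_has_vector_derivative)
  moreover have "((\<lambda>y. K / c * y) has_real_derivative K / c) (at x within {a..B})"
    by (rule DERIV_cmult_Id)
  ultimately have D: "(F has_real_derivative
      exp (K * x / c) * (K / c) * (C - integral {a..x} (wave_integrand \<psi>) / c)
       + (0 - wave_integrand \<psi> x / c) * exp (K * x / c)) (at x within {a..B})"
    unfolding F_def by (intro DERIV_mult DERIV_chain2[OF DERIV_exp] DERIV_diff DERIV_const DERIV_cdivide) simp_all
  have "exp (K * x / c) * wave_integrand \<psi> x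
      = (exp (K * x / c) * exp (- (K * x / c))) * shifted_wave_op \<psi> x"
    unfolding wave_integrand_def by (simp only: mult.assoc)
  then have E1: "(0 - wave_integrand \<psi> x / c) * exp (K * x / c) = - shifted_wave_op \<psi> x / c"
    by (simp add: exp_minus_inverse mult.commute)
  have E2: "exp (K * x / c) * (K / c) * (C - integral {a..x} (wave_integrand \<psi>) / c) = K / c * F x"
    unfolding F_def by (simp only: ac_simps)
  show ?thesis using D unfolding E1 E2 by simp
qed

lemma integrated_wave_eq_has_derivative:
  assumes \<psi>: "wave_profile L \<psi>" and eq: "\<And>a b. a \<le> b \<Longrightarrow> b \<le> B \<Longrightarrow> integrated_wave_eq \<psi> a b"
    and x: "x \<le> B"
  shows "(\<psi> has_real_derivative - wave_op \<psi> x / c) (at x within {..B})"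
proof -
  define a where "a = x - 1"
  define C where "C = \<psi> a * exp (- (K * a / c))"
  have xa: "x \<in> {a..B}" using x by (simp add: a_def)
  have \<psi>F: "\<psi> y = exp (K * y / c) * (C - integral {a..y} (wave_integrand \<psi>) / c)" if "y \<in> {a..B}" for y
  proof -
    have "\<psi> y * exp (- (K * y / c)) = C - integral {a..y} (wave_integrand \<psi>) / c"
      using eq[of a y] that unfolding integrated_wave_eq_def C_def by simp
    moreover have "exp (K * y / c) * exp (- (K * y / c)) = 1" by (simp add: exp_minus_inverse)
    ultimately show ?thesis by (metis mult.assoc mult.commute mult_1)
  qed
  have "((\<lambda>y. exp (K * y / c) * (C - integral {a..y} (wave_integrand \<psi>) / c)) has_real_derivative
      K / c * \<psi> x - shifted_wave_op \<psi> x / c) (at x within {a..B})"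
    using variation_of_constants_has_derivative[OF continuous_on_subset[OF continuous_on_wave_integrand[OF \<psi>]] xa]
    unfolding \<psi>F[OF xa] by simp
  moreover have "K / c * \<psi> x - shifted_wave_op \<psi> x / c = - wave_op \<psi> x / c"
    using c_pos by (simp add: shifted_wave_op_def field_simps)
  ultimately have "((\<lambda>y. exp (K * y / c) * (C - integral {a..y} (wave_integrand \<psi>) / c)) has_real_derivative
      - wave_op \<psi> x / c) (at x within {a..B})"
    by simp
  then have "(\<psi> has_real_derivative - wave_op \<psi> x / c) (at x within {a..B})"
    by (rule has_field_derivative_transform_within[OF _ zero_less_one xa]) (use \<psi>F in auto)
  moreover have "at x within {a..B} = at x within {..B}"
    by (rule at_within_nhd[of x "{a<..}"]) (auto simp: a_def)
  ultimately show ?thesis by simp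
qed

lemma integrated_wave_eq_has_derivative_at:
  assumes "wave_profile L \<psi>" "\<And>a b. a \<le> b \<Longrightarrow> b \<le> B \<Longrightarrow> integrated_wave_eq \<psi> a b" "x < B"
  shows "(\<psi> has_real_derivative - wave_op \<psi> x / c) (at x)"
proof -
  have "at x within {..B} = at x" by (rule at_within_nhd[of x "{..<B}"]) (use assms(3) in auto)
  then show ?thesis using integrated_wave_eq_has_derivative[OF assms(1,2) less_imp_le[OF assms(3)]] by simp
qed

lemma wave_profile_pointwise_limit:
  assumes u: "\<And>n. wave_profile L (u n)" and lim: "\<And>x. (\<lambda>n. u n x) \<longlonglongrightarrow> U x"
  shows "wave_profile L U"
  unfolding wave_profile_def
proof (intro conjI allI antimonoI)
  fix x y :: real assume "x \<le> y"
  show "U y \<le> U x"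
    by (rule LIMSEQ_le[OF lim lim]) (use u \<open>x \<le> y\<close> in \<open>auto simp: wave_profile_def dest: antimonoD\<close>)
next
  show "L-lipschitz_on UNIV U"
    by (rule lipschitz_on_pointwise_limit[OF _ lim]) (use u in \<open>auto simp: wave_profile_def\<close>)
next
  fix x
  show "0 \<le> U x" by (rule LIMSEQ_le_const[OF lim]) (use u in \<open>auto simp: wave_profile_def\<close>)
  show "U x \<le> 1" by (rule LIMSEQ_le_const2[OF lim]) (use u in \<open>auto simp: wave_profile_def\<close>)
qed

lemma shifted_wave_op_pointwise_limit:
  assumes u: "\<And>n. wave_profile L (u n)" and lim: "\<And>x. (\<lambda>n. u n x) \<longlonglongrightarrow> U x"
  shows "(\<lambda>n. shifted_wave_op (u n) y) \<longlonglongrightarrow> shifted_wave_op U y"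
proof -
  have U: "wave_profile L U" by (rule wave_profile_pointwise_limit[OF u lim])
  have "(\<lambda>n. conv (u n) y) \<longlonglongrightarrow> conv U y"
    by (rule conv_tendsto[OF wave_profile_measurable[OF u] wave_profile_measurable[OF U]
          wave_profile_abs_le[OF u] lim])
  moreover have "(\<lambda>n. f (u n y)) \<longlonglongrightarrow> f (U y)"
    by (rule continuous_on_tendsto_compose[OF f_cont lim]) (use u U in \<open>auto simp: wave_profile_def\<close>)
  ultimately show ?thesis
    unfolding shifted_wave_op_def wave_op_def by (intro tendsto_intros lim)
qed

lemma shifted_wave_op_abs_le:
  assumes \<psi>: "wave_profile L \<psi>"
  shows "\<bar>shifted_wave_op \<psi> y\<bar> \<le> 2 * d + Lf + K"
proof -
  have "0 \<le> \<psi> y" "\<psi> y \<le> 1" using \<psi> unfolding wave_profile_def by auto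
  moreover have "0 \<le> conv \<psi> y" "conv \<psi> y \<le> 1"
    using conv_bounds[OF wave_profile_measurable[OF \<psi>], of 0 1] \<psi> unfolding wave_profile_def by auto
  ultimately have "\<bar>d * conv \<psi> y\<bar> \<le> d" "\<bar>d * \<psi> y\<bar> \<le> d" "\<bar>K * \<psi> y\<bar> \<le> K" "\<bar>f (\<psi> y)\<bar> \<le> Lf"
    using d_nonneg K_pos f_bound by (auto simp: abs_mult mult_left_le)
  moreover have "\<bar>shifted_wave_op \<psi> y\<bar>
      \<le> \<bar>d * conv \<psi> y\<bar> + \<bar>d * \<psi> y\<bar> + \<bar>f (\<psi> y)\<bar> + \<bar>K * \<psi> y\<bar>"
    unfolding shifted_wave_op_def wave_op_def
    by (intro order_trans[OF abs_triangle_ineq] add_mono abs_triangle_ineq4 order_refl)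
  ultimately show ?thesis by linarith
qed

lemma integrated_wave_eq_pointwise_limit:
  assumes u: "\<And>n. wave_profile L (u n)" and lim: "\<And>x. (\<lambda>n. u n x) \<longlonglongrightarrow> U x"
    and "a \<le> b" and eq: "\<forall>\<^sub>F n in sequentially. integrated_wave_eq (u n) a b"
  shows "integrated_wave_eq U a b"
proof -
  define M where "M = exp (- (K * a / c)) * (2 * d + Lf + K)"
  have bound: "norm (wave_integrand (u n) y) \<le> M" if "y \<in> {a..b}" for n y
  proof -
    have "exp (- (K * y / c)) \<le> exp (- (K * a / c))"
      using that K_pos c_pos by (auto simp: divide_right_mono mult_left_mono)
    then show ?thesis unfolding wave_integrand_def M_def using shifted_wave_op_abs_le[OF u, of n y]
      by (simp add: abs_mult mult_mono)
  qed
  have "(\<lambda>n. integral {a..b} (wave_integrand (u n))) \<longlonglongrightarrow> integral {a..b} (wave_integrand U)"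
  proof (rule dominated_convergence(2))
    show "wave_integrand (u n) integrable_on {a..b}" for n
      by (rule integrable_continuous_real, rule continuous_on_subset[OF continuous_on_wave_integrand[OF u]]) auto
    show "(\<lambda>_. M) integrable_on {a..b}" by (rule integrable_const_ivl)
    show "(\<lambda>n. wave_integrand (u n) y) \<longlonglongrightarrow> wave_integrand U y" for y
      unfolding wave_integrand_def by (intro tendsto_intros shifted_wave_op_pointwise_limit[OF u lim])
  qed (use bound in auto)
  then have "(\<lambda>n. integral {a..b} (wave_integrand (u n)) / c) \<longlonglongrightarrow> integral {a..b} (wave_integrand U) / c"
    using c_pos by (intro tendsto_intros) auto
  moreover have "(\<lambda>n. u n a * exp (- (K * a / c)) - u n b * exp (- (K * b / c)))
      \<longlonglongrightarrow> U a * exp (- (K * a / c)) - U b * exp (- (K * b / c))"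
    by (intro tendsto_intros lim)
  then have "(\<lambda>n. integral {a..b} (wave_integrand (u n)) / c)
      \<longlonglongrightarrow> U a * exp (- (K * a / c)) - U b * exp (- (K * b / c))"
    by (rule Lim_transform_eventually) (use eq in \<open>auto simp: integrated_wave_eq_def elim: eventually_mono\<close>)
  ultimately show ?thesis unfolding integrated_wave_eq_def using LIMSEQ_unique by blast
qed

lemma wave_profile_convergent_subseq:
  assumes u: "\<And>n. wave_profile L (u n)"
  obtains k U where "strict_mono k" "\<And>x. (\<lambda>n. u (k n) x) \<longlonglongrightarrow> U x" "wave_profile L U"
    "\<And>a b. a \<le> b \<Longrightarrow> \<forall>\<^sub>F n in sequentially. integrated_wave_eq (u n) a b \<Longrightarrow> integrated_wave_eq U a b"
proof -
  obtain k U where k: "strict_mono k" and lim: "\<And>x. (\<lambda>n. u (k n) x) \<longlonglongrightarrow> U x"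
    using lipschitz_bounded_pointwise_convergent_subseq[of u 1 L] wave_profile_abs_le[OF u] u
    unfolding wave_profile_def by metis
  have uk: "wave_profile L (u (k n))" for n by (rule u)
  show ?thesis
  proof (rule that[OF k lim wave_profile_pointwise_limit[OF uk lim]])
    fix a b :: real assume "a \<le> b" "\<forall>\<^sub>F n in sequentially. integrated_wave_eq (u n) a b"
    then show "integrated_wave_eq U a b"
      by (intro integrated_wave_eq_pointwise_limit[OF uk lim] eventually_subseq[OF k])
  qed
qed

lemma wave_profile_shift:
  assumes "wave_profile L \<psi>"
  shows "wave_profile L (\<lambda>x. \<psi> (x + s))"
proof -
  have lip: "L-lipschitz_on UNIV \<psi>" using assms by (simp add: wave_profile_def)
  have "L-lipschitz_on UNIV (\<lambda>x. \<psi> (x + s))"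
  proof (rule lipschitz_onI)
    show "0 \<le> L" using lip by (rule lipschitz_on_nonneg)
    show "dist (\<psi> (x + s)) (\<psi> (y + s)) \<le> L * dist x y" for x y
      using lipschitz_onD[OF lip, of "x + s" "y + s"] by (simp add: dist_real_def)
  qed
  then show ?thesis using assms unfolding wave_profile_def by (auto simp: antimono_def)
qed

lemma integrated_wave_eq_shift:
  assumes eq: "integrated_wave_eq \<psi> (a + s) (b + s)"
  shows "integrated_wave_eq (\<lambda>x. \<psi> (x + s)) a b"
proof -
  define E where "E = exp (K * s / c)"
  have E: "exp (- (K * y / c)) = E * exp (- (K * (y + s) / c))" for y
    unfolding E_def exp_add[symmetric] using c_pos by (simp add: field_simps)
  have "wave_integrand (\<lambda>x. \<psi> (x + s)) y = E * wave_integrand \<psi> (y + s)" for y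
    unfolding wave_integrand_def shifted_wave_op_def wave_op_def conv_shift E[of y] by simp
  then have "wave_integrand (\<lambda>x. \<psi> (x + s)) = (\<lambda>y. E * wave_integrand \<psi> (y + s))" by (rule ext)
  then have "integral {a..b} (wave_integrand (\<lambda>x. \<psi> (x + s)))
      = E * integral {a..b} (\<lambda>y. wave_integrand \<psi> (y + s))"
    by simp
  also have "integral {a..b} (\<lambda>y. wave_integrand \<psi> (y + s)) = integral {a + s..b + s} (wave_integrand \<psi>)"
    using integral_shift_Icc_real[of a b "wave_integrand \<psi>" s] by (simp add: o_def add.commute)
  finally have "integral {a..b} (wave_integrand (\<lambda>x. \<psi> (x + s))) = E * integral {a + s..b + s} (wave_integrand \<psi>)" .
  with eq show ?thesis unfolding integrated_wave_eq_def E[of a] E[of b] by (simp add: algebra_simps)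
qed

section \<open>Behaviour at infinity\<close>

lemma wave_op_tendsto_sequentially:
  assumes U: "wave_profile L U" and lim: "\<And>z. (\<lambda>n. U (X n - z)) \<longlonglongrightarrow> l"
  shows "(\<lambda>n. wave_op U (X n)) \<longlonglongrightarrow> f l"
proof -
  have l: "0 \<le> l" "l \<le> 1"
    using LIMSEQ_le_const[OF lim[of 0]] LIMSEQ_le_const2[OF lim[of 0]] U
    unfolding wave_profile_def by auto
  have "(\<lambda>n. conv (\<lambda>w. U (w + X n)) 0) \<longlonglongrightarrow> conv (\<lambda>_. l) 0"
  proof (rule conv_tendsto)
    show "(\<lambda>w. U (w + X n)) \<in> borel_measurable borel" for n
      by (rule measurable_compose[OF _ wave_profile_measurable[OF U]]) simp
    show "\<bar>U (w + X n)\<bar> \<le> 1" for n w by (rule wave_profile_abs_le[OF U])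
    show "(\<lambda>n. U (w + X n)) \<longlonglongrightarrow> l" for w using lim[of "- w"] by (simp add: add.commute)
  qed simp
  then have "(\<lambda>n. conv U (X n)) \<longlonglongrightarrow> l" by (simp add: conv_shift conv_const)
  moreover have "(\<lambda>n. U (X n)) \<longlonglongrightarrow> l" using lim[of 0] by simp
  moreover have "(\<lambda>n. f (U (X n))) \<longlonglongrightarrow> f l"
    by (rule continuous_on_tendsto_compose[OF f_cont \<open>(\<lambda>n. U (X n)) \<longlonglongrightarrow> l\<close>])
       (use U l in \<open>auto simp: wave_profile_def\<close>)
  ultimately show ?thesis unfolding wave_op_def by (auto intro!: tendsto_eq_intros)
qed

lemma wave_op_tendsto_at_top:
  assumes U: "wave_profile L U" and lim: "(U \<longlongrightarrow> l) at_top"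
  shows "(wave_op U \<longlongrightarrow> f l) at_top"
proof (rule tendsto_at_topI_sequentially)
  fix X :: "nat \<Rightarrow> real" assume X: "filterlim X at_top sequentially"
  show "(\<lambda>n. wave_op U (X n)) \<longlonglongrightarrow> f l"
  proof (rule wave_op_tendsto_sequentially[OF U])
    fix z
    have "filterlim (\<lambda>n. X n - z) at_top sequentially"
      using filterlim_tendsto_add_at_top[OF tendsto_const X, of "- z"] by simp
    then show "(\<lambda>n. U (X n - z)) \<longlonglongrightarrow> l" by (rule filterlim_compose[OF lim])
  qed
qed

lemma wave_op_tendsto_at_bot:
  assumes U: "wave_profile L U" and lim: "(U \<longlongrightarrow> l) at_bot"
  shows "(wave_op U \<longlongrightarrow> f l) at_bot"
proof (rule tendsto_at_botI_sequentially)
  fix X :: "nat \<Rightarrow> real" assume X: "filterlim X at_bot sequentially"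
  show "(\<lambda>n. wave_op U (X n)) \<longlonglongrightarrow> f l"
  proof (rule wave_op_tendsto_sequentially[OF U])
    fix z
    have "filterlim (\<lambda>n. X n - z) at_bot sequentially"
      using filterlim_tendsto_add_at_bot_iff[OF tendsto_const[of "- z"], of X sequentially] X by simp
    then show "(\<lambda>n. U (X n - z)) \<longlonglongrightarrow> l" by (rule filterlim_compose[OF lim])
  qed
qed

text \<open>At either end a profile tends to a zero of \<open>f\<close>: otherwise \<open>c \<psi>' = - wave_op \<psi>\<close> would
  tend to a nonzero limit, which a bounded function cannot sustain.\<close>

lemma wave_profile_tendsto_one_at_bot:
  assumes U: "wave_profile L U" and eq: "\<And>a b. a \<le> b \<Longrightarrow> b \<le> B \<Longrightarrow> integrated_wave_eq U a b"
    and pos: "0 < U z"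
  shows "(U \<longlongrightarrow> 1) at_bot"
proof -
  define l where "l = (SUP x. U x)"
  have bdd: "bdd_above (range U)" using U unfolding wave_profile_def by (auto intro: bdd_aboveI[of _ 1])
  have lim: "(U \<longlongrightarrow> l) at_bot"
    unfolding l_def using U bdd by (intro antimono_tendsto_Sup_at_bot) (auto simp: wave_profile_def)
  have l: "U z \<le> l" "l \<le> 1"
    unfolding l_def using cSUP_upper[OF _ bdd, of z] U by (auto simp: wave_profile_def intro: cSUP_least)
  have "f l / c = 0"
  proof (rule has_real_derivative_tendsto_zero_at_top)
    show "((\<lambda>t. U (- t)) \<longlongrightarrow> l) at_top" using lim by (simp add: filterlim_at_bot_mirror)
    show "((\<lambda>t. wave_op U (- t) / c) \<longlongrightarrow> f l / c) at_top"
      by (rule tendsto_divide[OF _ tendsto_const])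
         (use c_pos wave_op_tendsto_at_bot[OF U lim] in \<open>auto simp: filterlim_at_bot_mirror\<close>)
    show "\<forall>\<^sub>F t in at_top. ((\<lambda>t. U (- t)) has_real_derivative wave_op U (- t) / c) (at t)"
    proof (rule eventually_at_top_linorderI[of "1 - B"])
      fix t :: real assume "1 - B \<le> t"
      then have "(U has_real_derivative - wave_op U (- t) / c) (at (- t))"
        by (intro integrated_wave_eq_has_derivative_at[OF U eq]) auto
      then show "((\<lambda>t. U (- t)) has_real_derivative wave_op U (- t) / c) (at t)"
        using DERIV_mirror by force
    qed
  qed
  then have "f l = 0" using c_pos by simp
  then show ?thesis using f_pos[of l] l pos lim by fastforce
qed

lemma wave_profile_tendsto_zero_at_top:
  assumes U: "wave_profile L U" and eq: "\<And>a b. a \<le> b \<Longrightarrow> integrated_wave_eq U a b"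
    and less: "U z < 1"
  shows "(U \<longlongrightarrow> 0) at_top"
proof -
  define l where "l = (INF x. U x)"
  have bdd: "bdd_below (range U)" using U unfolding wave_profile_def by (auto intro: bdd_belowI[of _ 0])
  have lim: "(U \<longlongrightarrow> l) at_top"
    unfolding l_def using U bdd by (intro antimono_tendsto_Inf_at_top) (auto simp: wave_profile_def)
  have l: "l \<le> U z" "0 \<le> l"
    unfolding l_def using cINF_lower[OF bdd, of z] U by (auto simp: wave_profile_def intro: cINF_greatest)
  have "- f l / c = 0"
  proof (rule has_real_derivative_tendsto_zero_at_top[OF lim])
    show "((\<lambda>t. - wave_op U t / c) \<longlongrightarrow> - f l / c) at_top"
      using wave_op_tendsto_at_top[OF U lim] c_pos by (intro tendsto_intros) auto
    show "\<forall>\<^sub>F t in at_top. (U has_real_derivative - wave_op U t / c) (at t)"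
    proof (intro always_eventually allI)
      fix t :: real
      show "(U has_real_derivative - wave_op U t / c) (at t)"
        by (rule integrated_wave_eq_has_derivative_at[OF U, of "t + 1"]) (use eq in auto)
    qed
  qed
  then have "f l = 0" using c_pos by simp
  then show ?thesis using f_pos[of l] l less lim by fastforce
qed

section \<open>Semi-waves versus travelling waves\<close>

lemma semi_wave_of_profile:
  assumes U: "wave_profile L U" and zero: "\<And>x. 0 \<le> x \<Longrightarrow> U x = 0"
    and eq: "\<And>a b. a \<le> b \<Longrightarrow> b \<le> 0 \<Longrightarrow> integrated_wave_eq U a b" and pos: "0 < U z"
  shows "semi_wave d J f c U"
  unfolding semi_wave_def
proof (intro exI[of _ "\<lambda>x. - wave_op U x / c"] conjI allI impI)
  fix x :: real assume "x \<le> 0"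
  show "(U has_real_derivative - wave_op U x / c) (at x within {..0})"
    by (rule integrated_wave_eq_has_derivative[OF U, of 0]) (use eq \<open>x \<le> 0\<close> in auto)
  show "0 \<le> U x" "U x \<le> 1" using U unfolding wave_profile_def by auto
next
  show "continuous_on {..0} (\<lambda>x. - wave_op U x / c)"
  proof (rule continuous_on_subset)
    show "continuous_on UNIV (\<lambda>x. - wave_op U x / c)"
      using continuous_on_wave_op[OF U] c_pos by (intro continuous_intros) auto
  qed simp
next
  fix x :: real assume "x < 0"
  have "(LINT y:{..0}|lborel. J (x - y) * U y) = (\<integral>y. J (x - y) * U y \<partial>lborel)"
    unfolding set_lebesgue_integral_def
    by (rule Bochner_Integration.integral_cong) (auto simp: indicator_def zero)
  then have "(LINT y:{..0}|lborel. J (x - y) * U y) = conv U x"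
    unfolding conv_def lborel_integral_convolution_commute .
  then show "d * (LINT y:{..0}|lborel. J (x - y) * U y) - d * U x + c * (- wave_op U x / c) + f (U x) = 0"
    using c_pos unfolding wave_op_def by simp
next
  show "(U \<longlongrightarrow> 1) at_bot" by (rule wave_profile_tendsto_one_at_bot[OF U eq pos])
  show "U 0 = 0" by (rule zero) simp
qed

lemma tw_exists_of_profile:
  assumes U: "wave_profile L U" and eq: "\<And>a b. a \<le> b \<Longrightarrow> integrated_wave_eq U a b"
    and "0 < U z" "U z < 1"
  shows "tw_exists d J f c"
proof -
  have "bounded (range U)" unfolding bounded_real using wave_profile_abs_le[OF U] by blast
  moreover have "\<forall>x y. x \<le> y \<longrightarrow> U y \<le> U x" using U by (simp add: wave_profile_def antimono_def)
  moreover have "\<forall>x. (U has_real_derivative - wave_op U x / c) (at x)"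
  proof
    fix x
    show "(U has_real_derivative - wave_op U x / c) (at x)"
      by (rule integrated_wave_eq_has_derivative_at[OF U, of "x + 1"]) (use eq in auto)
  qed
  moreover have "\<forall>x. d * (\<integral>y. J (x - y) * U y \<partial>lborel) - d * U x + c * (- wave_op U x / c) + f (U x) = 0"
    using c_pos unfolding wave_op_def conv_def lborel_integral_convolution_commute by simp
  moreover have "(U \<longlongrightarrow> 1) at_bot" by (rule wave_profile_tendsto_one_at_bot[OF U _ \<open>0 < U z\<close>]) (rule eq)
  moreover have "(U \<longlongrightarrow> 0) at_top" by (rule wave_profile_tendsto_zero_at_top[OF U eq \<open>U z < 1\<close>])
  ultimately show ?thesis
    unfolding tw_exists_def by (intro exI[of _ U] exI[of _ "\<lambda>x. - wave_op U x / c"]) simp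
qed

lemma wave_profile_crosses_level:
  assumes U: "wave_profile L U" and lim: "(U \<longlongrightarrow> 1) at_bot" and "U 0 \<le> y" "y < 1"
  shows "\<exists>t\<le>0. U t = y"
proof -
  obtain z where z: "\<And>x. x \<le> z \<Longrightarrow> y < U x"
    using order_tendstoD(1)[OF lim \<open>y < 1\<close>] by (auto simp: eventually_at_bot_linorder)
  have "continuous_on {min z 0..0} U" using wave_profile_continuous[OF U] by (rule continuous_on_subset) auto
  then obtain t where "min z 0 \<le> t" "t \<le> 0" "U t = y"
    using IVT2'[of U 0 y "min z 0"] z[of "min z 0"] \<open>U 0 \<le> y\<close> by force
  then show ?thesis by blast
qed

text \<open>If the approximate semi-waves collapse to zero, recentring them at their \<open>1/2\<close>-level,
  which escapes to \<open>-\<infinity>\<close>, yields in the limit a travelling wave with speed \<open>c\<close>.\<close>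

lemma tw_exists_of_collapsing_profiles:
  assumes u: "\<And>n. wave_profile L (u n)"
    and eq: "\<And>n a b. a \<le> b \<Longrightarrow> b \<le> 0 \<Longrightarrow> integrated_wave_eq (u n) a b"
    and u0: "\<And>n. 0 < u n 0" "\<And>n. u n 0 \<le> 1/2" and vanish: "\<And>x. (\<lambda>n. u n x) \<longlonglongrightarrow> 0"
  shows "tw_exists d J f c"
proof -
  have "\<forall>n. \<exists>t. u n t = 1/2"
  proof
    fix n
    have "(u n \<longlongrightarrow> 1) at_bot" by (rule wave_profile_tendsto_one_at_bot[OF u eq u0(1)])
    then have "\<exists>t\<le>0. u n t = 1/2" by (rule wave_profile_crosses_level[OF u _ u0(2)]) simp
    then show "\<exists>t. u n t = 1/2" by blast
  qed
  then obtain s where "\<forall>n. u n (s n) = 1/2" by (rule choice[THEN exE])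
  then have half: "\<And>n. u n (s n) = 1/2" by blast
  have s: "filterlim s at_bot sequentially"
    by (rule antimono_level_tendsto_at_bot[OF _ half vanish]) (use u in \<open>auto simp: wave_profile_def\<close>)
  define v where "v n x = u n (x + s n)" for n x
  have v: "wave_profile L (v n)" for n unfolding v_def[abs_def] by (rule wave_profile_shift[OF u])
  obtain k V where lim: "\<And>x. (\<lambda>n. v (k n) x) \<longlonglongrightarrow> V x" and V: "wave_profile L V"
    and eqV: "\<And>a b. a \<le> b \<Longrightarrow> \<forall>\<^sub>F n in sequentially. integrated_wave_eq (v n) a b \<Longrightarrow> integrated_wave_eq V a b"
    using wave_profile_convergent_subseq[where u = v, OF v] by metis
  have "V 0 = 1/2" using lim[of 0] half by (simp add: v_def LIMSEQ_const_iff)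
  moreover have "integrated_wave_eq V a b" if "a \<le> b" for a b
  proof (rule eqV[OF that])
    have "\<forall>\<^sub>F n in sequentially. s n \<le> - b" using s by (simp add: filterlim_at_bot)
    then show "\<forall>\<^sub>F n in sequentially. integrated_wave_eq (v n) a b"
    proof (rule eventually_mono)
      fix n assume "s n \<le> - b"
      then have "integrated_wave_eq (u n) (a + s n) (b + s n)" using that by (intro eq) auto
      then show "integrated_wave_eq (v n) a b" unfolding v_def[abs_def] by (rule integrated_wave_eq_shift)
    qed
  qed
  ultimately show ?thesis using tw_exists_of_profile[OF V, of 0] by simp
qed

lemma approximate_semi_waves:
  obtains u :: "nat \<Rightarrow> real \<Rightarrow> real" where "\<And>n. wave_profile (K / c) (u n)"
    "\<And>n a b. a \<le> b \<Longrightarrow> b \<le> 0 \<Longrightarrow> integrated_wave_eq (u n) a b"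
    "\<And>n x. 0 \<le> x \<Longrightarrow> u n x = u n 0" "\<And>n. 0 < u n 0" "\<And>n. u n 0 \<le> 1/2"
    "(\<lambda>n. u n 0) \<longlonglongrightarrow> 0"
proof -
  define \<theta> :: "nat \<Rightarrow> real" where "\<theta> n = 1 / real (n + 3)" for n
  have \<theta>: "0 < \<theta> n" "\<theta> n \<le> 1/2" "0 \<le> \<theta> n" "\<theta> n \<le> 1" for n by (simp_all add: \<theta>_def)
  have "\<forall>n. \<exists>\<phi>. wave_profile (K / c) \<phi> \<and> (\<forall>x\<ge>0. \<phi> x = \<theta> n) \<and>
      (\<forall>a b. a \<le> b \<and> b \<le> 0 \<longrightarrow> integrated_wave_eq \<phi> a b)"
    using \<theta> by (intro allI semi_wave_approximation)
  then obtain u where u: "\<forall>n. wave_profile (K / c) (u n) \<and> (\<forall>x\<ge>0. u n x = \<theta> n) \<and>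
      (\<forall>a b. a \<le> b \<and> b \<le> 0 \<longrightarrow> integrated_wave_eq (u n) a b)"
    by (rule choice[THEN exE])
  have "\<theta> \<longlonglongrightarrow> 0"
    using LIMSEQ_ignore_initial_segment[OF lim_1_over_n[where 'a = real], of 3]
    unfolding \<theta>_def[abs_def] by simp
  with u \<theta> show ?thesis by (intro that[of u]) auto
qed

lemma semi_wave_or_travelling_wave:
  "(\<exists>\<phi>. semi_wave d J f c \<phi> \<and> (\<forall>x y. x \<le> y \<and> y \<le> 0 \<longrightarrow> \<phi> y \<le> \<phi> x)) \<or> tw_exists d J f c"
proof -
  obtain u where u: "\<And>n. wave_profile (K / c) (u n)"
    and eq: "\<And>n a b. a \<le> b \<Longrightarrow> b \<le> 0 \<Longrightarrow> integrated_wave_eq (u n) a b"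
    and const: "\<And>n x. 0 \<le> x \<Longrightarrow> u n x = u n 0" and u0: "\<And>n. 0 < u n 0" "\<And>n. u n 0 \<le> 1/2"
    and lim0: "(\<lambda>n. u n 0) \<longlonglongrightarrow> 0"
    using approximate_semi_waves by blast
  obtain k \<Phi> where k: "strict_mono k" and lim: "\<And>x. (\<lambda>n. u (k n) x) \<longlonglongrightarrow> \<Phi> x"
    and \<Phi>: "wave_profile (K / c) \<Phi>"
    and eq\<Phi>: "\<And>a b. a \<le> b \<Longrightarrow> \<forall>\<^sub>F n in sequentially. integrated_wave_eq (u n) a b \<Longrightarrow> integrated_wave_eq \<Phi> a b"
    using wave_profile_convergent_subseq[where u = u, OF u] by metis
  have "(\<lambda>n. u (k n) 0) \<longlonglongrightarrow> 0" using LIMSEQ_subseq_LIMSEQ[OF lim0 k] by (simp add: o_def)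
  then have zero: "\<Phi> x = 0" if "0 \<le> x" for x
    using LIMSEQ_unique[OF lim[of x]] const[OF that] by simp
  have eq\<Phi>': "\<And>a b. a \<le> b \<Longrightarrow> b \<le> 0 \<Longrightarrow> integrated_wave_eq \<Phi> a b"
    using eq by (auto intro!: eq\<Phi>)
  show ?thesis
  proof (cases "\<exists>x. 0 < \<Phi> x")
    case True
    then have "semi_wave d J f c \<Phi>" using semi_wave_of_profile[OF \<Phi> zero eq\<Phi>'] by blast
    with \<Phi> show ?thesis unfolding wave_profile_def antimono_def by blast
  next
    case False
    then have "\<Phi> x = 0" for x using \<Phi> unfolding wave_profile_def by (simp add: not_less order.antisym)
    then have "(\<lambda>n. u (k n) x) \<longlonglongrightarrow> 0" for x using lim[of x] by simp
    with u eq u0 have "tw_exists d J f c"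
      by (intro tw_exists_of_collapsing_profiles[where u = "\<lambda>n. u (k n)"])
    then show ?thesis ..
  qed
qed

end

lemma cond_f3_lipschitz:
  assumes "cond_f3 f"
  obtains L where "L-lipschitz_on {0..1} f"
proof -
  obtain f' where deriv: "\<And>u. 0 \<le> u \<Longrightarrow> (f has_real_derivative f' u) (at u within {0..})"
    and cont: "continuous_on {0..} f'"
    using assms unfolding cond_f3_def by blast
  have "continuous_on {0..1} f'" using cont by (rule continuous_on_subset) auto
  then obtain B where "0 \<le> B" and B: "\<And>x. x \<in> {0..1} \<Longrightarrow> norm (f' x) \<le> B"
    using continuous_on_compact_bound[OF compact_Icc] by blast
  have "B-lipschitz_on {0..1} f"
  proof (rule lipschitz_onI)
    show "0 \<le> B" by fact
    fix u v :: real assume uv: "u \<in> {0..1}" "v \<in> {0..1}"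
    have "norm (f u - f v) \<le> B * norm (u - v)"
    proof (rule field_differentiable_bound[of "{0..1}" f f' B])
      fix z :: real assume z: "z \<in> {0..1}"
      show "(f has_field_derivative f' z) (at z within {0..1})"
        using deriv[of z] z by (auto intro: DERIV_subset)
      show "norm (f' z) \<le> B" using B z .
    qed (use uv in auto)
    then show "dist (f u) (f v) \<le> B * dist u v" by (simp add: dist_norm)
  qed
  then show ?thesis by (rule that)
qed

theorem theorem2p4:
  fixes d c_star :: real and J f :: "real \<Rightarrow> real"
  assumes "d > 0" and "cond_J J" and "cond_J2 J" and "cond_f3 f"
    and "c_star > 0" and "\<forall>c. tw_exists d J f c \<longleftrightarrow> c \<ge> c_star"
  shows "\<forall>c. 0 < c \<and> c < c_star \<longrightarrow>
    (\<exists>\<phi>. semi_wave d J f c \<phi> \<and> (\<forall>x y. x \<le> y \<and> y \<le> 0 \<longrightarrow> \<phi> y \<le> \<phi> x))"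
proof (intro allI impI)
  fix c :: real assume c: "0 < c \<and> c < c_star"
  obtain Lf where Lf: "Lf-lipschitz_on {0..1} f" using cond_f3_lipschitz[OF assms(4)] .
  interpret semi_wave_setting d c "d + Lf + 1" Lf J f
    using assms(1,2,4) c Lf by unfold_locales (auto simp: cond_J_def cond_f3_def)
  \<comment> \<open>(J2), the symmetry of \<open>J\<close> and \<open>c_star > 0\<close> only matter for the characterisation
    of \<open>c_star\<close>, which is assumed here.\<close>
  have "\<not> tw_exists d J f c" using assms(6) c by auto
  then show "\<exists>\<phi>. semi_wave d J f c \<phi> \<and> (\<forall>x y. x \<le> y \<and> y \<le> 0 \<longrightarrow> \<phi> y \<le> \<phi> x)"
    using semi_wave_or_travelling_wave by blast
qed

end
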